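(* Let $X$ be a Tychonoff space with $|X|>2$. Then $\mathrm{girth}(\mathbb{AG}(X))=3$.
   Context: $C(X)$ is the ring of real-valued continuous functions on $X$. $\mathbb{A}(X)$ is the set of nonzero ideals $I$ of $C(X)$ for which there is a nonzero ideal $J$ with $IJ=\{0\}$; $\mathbb{AG}(X)$ has vertex set $\mathbb{A}(X)$, distinct $I,J$ adjacent iff $IJ=\{0\}$. The girth is the minimum length of a cycle in the graph. *)

theory Defs
  imports "HOL-Analysis.Analysis" "HOL-Library.Extended_Nat"
begin

definition tychonoff_space :: "'a topology \<Rightarrow> bool" where
  "tychonoff_space X \<longleftrightarrow> completely_regular_space X \<and> t1_space X"

text \<open>The ring C(X) of real-valued continuous functions on X; functions are
  normalised to be 0 outside the topological space so that equality of
  functions is equality on X.\<close>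
definition CX :: "'a topology \<Rightarrow> ('a \<Rightarrow> real) set" where
  "CX X = {f. continuous_map X euclideanreal f \<and> (\<forall>x. x \<notin> topspace X \<longrightarrow> f x = 0)}"

definition is_ideal_CX :: "'a topology \<Rightarrow> ('a \<Rightarrow> real) set \<Rightarrow> bool" where
  "is_ideal_CX X I \<longleftrightarrow> I \<subseteq> CX X \<and> (\<lambda>x. 0) \<in> I
     \<and> (\<forall>f\<in>I. \<forall>g\<in>I. (\<lambda>x. f x + g x) \<in> I)
     \<and> (\<forall>f\<in>I. \<forall>h\<in>CX X. (\<lambda>x. h x * f x) \<in> I)"

definition ideal_prod :: "('a \<Rightarrow> real) set \<Rightarrow> ('a \<Rightarrow> real) set \<Rightarrow> ('a \<Rightarrow> real) set" where
  "ideal_prod I J = {f. \<exists>(n::nat) a b. (\<forall>i<n. a i \<in> I \<and> b i \<in> J)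
                          \<and> f = (\<lambda>x. \<Sum>i<n. a i x * b i x)}"

definition zero_ideal :: "('a \<Rightarrow> real) set" where
  "zero_ideal = {\<lambda>x. 0}"

definition AX :: "'a topology \<Rightarrow> ('a \<Rightarrow> real) set set" where
  "AX X = {I. is_ideal_CX X I \<and> I \<noteq> zero_ideal \<and>
             (\<exists>J. is_ideal_CX X J \<and> J \<noteq> zero_ideal \<and> ideal_prod I J = zero_ideal)}"

definition AG_adj :: "'a topology \<Rightarrow> ('a \<Rightarrow> real) set \<Rightarrow> ('a \<Rightarrow> real) set \<Rightarrow> bool" where
  "AG_adj X I J \<longleftrightarrow> I \<in> AX X \<and> J \<in> AX X \<and> I \<noteq> J \<and> ideal_prod I J = zero_ideal"

definition is_cycle :: "'v set \<Rightarrow> ('v \<Rightarrow> 'v \<Rightarrow> bool) \<Rightarrow> 'v list \<Rightarrow> bool" where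
  "is_cycle V E vs \<longleftrightarrow> length vs \<ge> 3 \<and> distinct vs \<and> set vs \<subseteq> V
     \<and> (\<forall>i<length vs. E (vs ! i) (vs ! ((i + 1) mod length vs)))"

text \<open>Girth: minimum cycle length (infinity if there is no cycle).\<close>
definition girth :: "'v set \<Rightarrow> ('v \<Rightarrow> 'v \<Rightarrow> bool) \<Rightarrow> enat" where
  "girth V E = (INF vs\<in>{vs. is_cycle V E vs}. enat (length vs))"

end

theory Submission
  imports Defs
begin

text \<open>In a Tychonoff space three distinct points have pairwise disjoint open neighbourhoods,
  and complete regularity gives a nonzero continuous function supported in each of them.
  These three functions are pairwise orthogonal, so the principal ideals they generate are
  three distinct, pairwise annihilating vertices of \<open>AG(X)\<close>: a triangle. Since cycles
  have length at least 3 by definition, the girth is 3.\<close>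

lemma girth_le_cycle_length: "is_cycle V E vs \<Longrightarrow> girth V E \<le> enat (length vs)"
  unfolding girth_def by (rule INF_lower) simp

lemma girth_ge_3: "3 \<le> girth V E"
  unfolding girth_def is_cycle_def by (rule INF_greatest) (auto simp: numeral_eq_enat)

lemma is_cycle_triangle:
  assumes "distinct [u, v, w]" "{u, v, w} \<subseteq> V" "E u v" "E v w" "E w u"
  shows "is_cycle V E [u, v, w]"
  unfolding is_cycle_def
proof (intro conjI allI impI)
  fix i assume "i < length [u, v, w]"
  then have "i = 0 \<or> i = 1 \<or> i = 2" by auto
  then show "E ([u, v, w] ! i) ([u, v, w] ! ((i + 1) mod length [u, v, w]))"
    using assms(3-5) by auto
qed (use assms(1,2) in auto)

lemma girth_eq_3_of_triangle:
  assumes "distinct [u, v, w]" "{u, v, w} \<subseteq> V" "E u v" "E v w" "E w u"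
  shows "girth V E = 3"
proof (rule antisym)
  show "girth V E \<le> 3"
    using girth_le_cycle_length[OF is_cycle_triangle[OF assms]]
    by (simp add: numeral_eq_enat numeral_3_eq_3)
qed (rule girth_ge_3)

lemma CX_zero: "(\<lambda>x. 0) \<in> CX X"
  unfolding CX_def by auto

lemma CX_unit: "(\<lambda>x. if x \<in> topspace X then 1 else 0) \<in> CX X"
  unfolding CX_def by (auto intro: continuous_map_eq[of X euclideanreal "\<lambda>x. 1"])

lemma CX_add: "h \<in> CX X \<Longrightarrow> k \<in> CX X \<Longrightarrow> (\<lambda>x. h x + k x) \<in> CX X"
  unfolding CX_def by (auto intro: continuous_map_add)

lemma CX_mult: "h \<in> CX X \<Longrightarrow> k \<in> CX X \<Longrightarrow> (\<lambda>x. h x * k x) \<in> CX X"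
  unfolding CX_def by (auto intro: continuous_map_real_mult)

definition principal_ideal :: "'a topology \<Rightarrow> ('a \<Rightarrow> real) \<Rightarrow> ('a \<Rightarrow> real) set" where
  "principal_ideal X f = {g. \<exists>h\<in>CX X. g = (\<lambda>x. h x * f x)}"

lemma is_ideal_CX_principal_ideal:
  assumes "f \<in> CX X"
  shows "is_ideal_CX X (principal_ideal X f)"
  unfolding is_ideal_CX_def
proof (intro conjI ballI)
  show "principal_ideal X f \<subseteq> CX X"
    using assms CX_mult unfolding principal_ideal_def by blast
  show "(\<lambda>x. 0) \<in> principal_ideal X f"
    unfolding principal_ideal_def using CX_zero by force
next
  fix g k assume "g \<in> principal_ideal X f" "k \<in> principal_ideal X f"
  then obtain h1 h2 where "h1 \<in> CX X" "h2 \<in> CX X"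
    and "g = (\<lambda>x. h1 x * f x)" "k = (\<lambda>x. h2 x * f x)"
    unfolding principal_ideal_def by blast
  then show "(\<lambda>x. g x + k x) \<in> principal_ideal X f"
    unfolding principal_ideal_def
    by (intro CollectI bexI[of _ "\<lambda>x. h1 x + h2 x"]) (auto simp: distrib_right CX_add)
next
  fix g k assume "g \<in> principal_ideal X f" "k \<in> CX X"
  then obtain h where "h \<in> CX X" "g = (\<lambda>x. h x * f x)"
    unfolding principal_ideal_def by blast
  with \<open>k \<in> CX X\<close> show "(\<lambda>x. k x * g x) \<in> principal_ideal X f"
    unfolding principal_ideal_def
    by (intro CollectI bexI[of _ "\<lambda>x. k x * h x"]) (auto simp: mult.assoc CX_mult)
qed

lemma principal_ideal_self:
  assumes "f \<in> CX X"
  shows "f \<in> principal_ideal X f"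
proof -
  have "f = (\<lambda>x. (if x \<in> topspace X then 1 else 0) * f x)"
    using assms unfolding CX_def by auto
  then show ?thesis
    unfolding principal_ideal_def by (intro CollectI bexI[OF _ CX_unit])
qed

lemma principal_ideal_neq_zero_ideal:
  "f \<in> CX X \<Longrightarrow> f \<noteq> (\<lambda>x. 0) \<Longrightarrow> principal_ideal X f \<noteq> zero_ideal"
  using principal_ideal_self unfolding zero_ideal_def by fastforce

lemma ideal_prod_principal_ideal_orthogonal:
  assumes orth: "\<forall>x. f x * g x = 0"
  shows "ideal_prod (principal_ideal X f) (principal_ideal X g) = zero_ideal"
proof -
  have "k = (\<lambda>x. 0)" if k_mem: "k \<in> ideal_prod (principal_ideal X f) (principal_ideal X g)" for k
  proof -
    obtain n :: nat and a b where ab: "\<forall>i<n. a i \<in> principal_ideal X f \<and> b i \<in> principal_ideal X g"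
      and k: "k = (\<lambda>x. \<Sum>i<n. a i x * b i x)"
      using k_mem unfolding ideal_prod_def mem_Collect_eq by (elim exE conjE)
    have "a i x * b i x = 0" if "i < n" for i x
    proof -
      obtain h1 h2 where "a i = (\<lambda>x. h1 x * f x)" "b i = (\<lambda>x. h2 x * g x)"
        using ab \<open>i < n\<close> unfolding principal_ideal_def by blast
      then have "a i x * b i x = (h1 x * h2 x) * (f x * g x)"
        by (simp add: algebra_simps)
      with orth show ?thesis by simp
    qed
    then show ?thesis
      unfolding k by (intro ext sum.neutral) auto
  qed
  moreover have "(\<lambda>x. 0) \<in> ideal_prod (principal_ideal X f) (principal_ideal X g)"
    unfolding ideal_prod_def by (rule CollectI, rule exI[of _ 0]) auto
  ultimately show ?thesis
    unfolding zero_ideal_def by blast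
qed

lemma principal_ideal_neq_orthogonal:
  assumes "f \<in> CX X" "f \<noteq> (\<lambda>x. 0)" "\<forall>x. f x * g x = 0"
  shows "principal_ideal X f \<noteq> principal_ideal X g"
proof
  assume "principal_ideal X f = principal_ideal X g"
  with principal_ideal_self[OF assms(1)] obtain h where "f = (\<lambda>x. h x * g x)"
    unfolding principal_ideal_def by blast
  with assms(3) have "\<forall>x. f x * f x = 0"
    by (metis mult.commute mult.left_commute mult_zero_right)
  with assms(2) show False
    by (auto simp: fun_eq_iff)
qed

lemma principal_ideal_in_AX:
  assumes "f \<in> CX X" "f \<noteq> (\<lambda>x. 0)" "g \<in> CX X" "g \<noteq> (\<lambda>x. 0)"
    and "\<forall>x. f x * g x = 0"
  shows "principal_ideal X f \<in> AX X"
  unfolding AX_def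
  using is_ideal_CX_principal_ideal[OF assms(1)] principal_ideal_neq_zero_ideal[OF assms(1,2)]
    is_ideal_CX_principal_ideal[OF assms(3)] principal_ideal_neq_zero_ideal[OF assms(3,4)]
    ideal_prod_principal_ideal_orthogonal[OF assms(5)]
  by blast

lemma AG_adj_principal_ideal_orthogonal:
  assumes "f \<in> CX X" "f \<noteq> (\<lambda>x. 0)" "g \<in> CX X" "g \<noteq> (\<lambda>x. 0)"
    and orth: "\<forall>x. f x * g x = 0"
  shows "AG_adj X (principal_ideal X f) (principal_ideal X g)"
proof -
  have "\<forall>x. g x * f x = 0"
    using orth by (simp add: mult.commute)
  then have "principal_ideal X g \<in> AX X"
    using principal_ideal_in_AX[OF assms(3,4,1,2)] by blast
  then show ?thesis
    unfolding AG_adj_def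
    using principal_ideal_in_AX[OF assms] principal_ideal_neq_orthogonal[OF assms(1,2) orth]
      ideal_prod_principal_ideal_orthogonal[OF orth]
    by blast
qed

lemma completely_regular_bump:
  assumes "completely_regular_space X" "openin X U" "a \<in> U"
  obtains f where "f \<in> CX X" "f a \<noteq> 0" "\<And>x. x \<notin> U \<Longrightarrow> f x = 0"
proof -
  have closed: "closedin X (topspace X - U)" and mem: "a \<in> topspace X - (topspace X - U)"
    using assms(2,3) openin_subset by auto
  obtain g :: "'a \<Rightarrow> real" where g: "continuous_map X (top_of_set {0..1}) g" "g a = 0"
    "g ` (topspace X - U) \<subseteq> {1}"
    using assms(1)[unfolded completely_regular_space_def, rule_format, OF conjI[OF closed mem]]
    by blast
  define f where "f = (\<lambda>x. if x \<in> topspace X then 1 - g x else 0)"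
  have g_cont: "continuous_map X euclideanreal g"
    using g(1) continuous_map_in_subtopology by blast
  have "continuous_map X euclideanreal f"
    by (rule continuous_map_eq[of X euclideanreal "\<lambda>x. 1 - g x"])
       (auto simp: f_def intro: continuous_map_diff g_cont)
  then have "f \<in> CX X"
    unfolding CX_def f_def by auto
  moreover have "f a \<noteq> 0"
    using g(2) assms(2,3) openin_subset unfolding f_def by auto
  moreover have "f x = 0" if "x \<notin> U" for x
    using g(3) that unfolding f_def by auto
  ultimately show ?thesis
    using that by blast
qed

lemma Hausdorff_space_three_separated:
  assumes "Hausdorff_space X" "a \<in> topspace X" "b \<in> topspace X" "c \<in> topspace X"
    and "a \<noteq> b" "a \<noteq> c" "b \<noteq> c"
  obtains U V W where "openin X U" "openin X V" "openin X W" "a \<in> U" "b \<in> V" "c \<in> W"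
    "disjnt U V" "disjnt U W" "disjnt V W"
proof -
  obtain U1 V1 where "openin X U1" "openin X V1" "a \<in> U1" "b \<in> V1" "disjnt U1 V1"
    using assms(1)[unfolded Hausdorff_space_def, rule_format, of a b] assms(2-7) by blast
  moreover obtain U2 W2 where "openin X U2" "openin X W2" "a \<in> U2" "c \<in> W2" "disjnt U2 W2"
    using assms(1)[unfolded Hausdorff_space_def, rule_format, of a c] assms(2-7) by blast
  moreover obtain V3 W3 where "openin X V3" "openin X W3" "b \<in> V3" "c \<in> W3" "disjnt V3 W3"
    using assms(1)[unfolded Hausdorff_space_def, rule_format, of b c] assms(2-7) by blast
  ultimately show ?thesis
    using that[of "U1 \<inter> U2" "V1 \<inter> V3" "W2 \<inter> W3"] by (auto simp: disjnt_def)
qed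

lemma tychonoff_three_orthogonal:
  assumes "tychonoff_space X" "a \<in> topspace X" "b \<in> topspace X" "c \<in> topspace X"
    and "a \<noteq> b" "a \<noteq> c" "b \<noteq> c"
  obtains f g k where "f \<in> CX X" "f \<noteq> (\<lambda>x. 0)" "g \<in> CX X" "g \<noteq> (\<lambda>x. 0)"
    "k \<in> CX X" "k \<noteq> (\<lambda>x. 0)"
    "\<forall>x. f x * g x = 0" "\<forall>x. g x * k x = 0" "\<forall>x. k x * f x = 0"
proof -
  have cr: "completely_regular_space X" and "t1_space X"
    using assms(1) unfolding tychonoff_space_def by auto
  then have "Hausdorff_space X"
    by (simp add: completely_regular_imp_regular_space regular_t1_imp_Hausdorff_space)
  then obtain U V W where UVW: "openin X U" "openin X V" "openin X W" "a \<in> U" "b \<in> V" "c \<in> W"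
    "disjnt U V" "disjnt U W" "disjnt V W"
    using Hausdorff_space_three_separated[OF _ assms(2-7)] by blast
  obtain f where f: "f \<in> CX X" "f a \<noteq> 0" "\<And>x. x \<notin> U \<Longrightarrow> f x = 0"
    using completely_regular_bump[OF cr UVW(1,4)] by blast
  obtain g where g: "g \<in> CX X" "g b \<noteq> 0" "\<And>x. x \<notin> V \<Longrightarrow> g x = 0"
    using completely_regular_bump[OF cr UVW(2,5)] by blast
  obtain k where k: "k \<in> CX X" "k c \<noteq> 0" "\<And>x. x \<notin> W \<Longrightarrow> k x = 0"
    using completely_regular_bump[OF cr UVW(3,6)] by blast
  have "f x * g x = 0" "g x * k x = 0" "k x * f x = 0" for x
    using f(3)[of x] g(3)[of x] k(3)[of x] UVW(7-9) by (auto simp: disjnt_iff)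
  moreover have "f \<noteq> (\<lambda>x. 0)" "g \<noteq> (\<lambda>x. 0)" "k \<noteq> (\<lambda>x. 0)"
    using f(2) g(2) k(2) by auto
  ultimately show ?thesis
    using that[of f g k] f(1) g(1) k(1) by blast
qed

theorem mainTheorem14:
  fixes X :: "'a topology"
  assumes "tychonoff_space X"
    and "\<exists>a b c. a \<in> topspace X \<and> b \<in> topspace X \<and> c \<in> topspace X
                 \<and> a \<noteq> b \<and> a \<noteq> c \<and> b \<noteq> c"
  shows "girth (AX X) (AG_adj X) = 3"
proof -
  obtain a b c where abc: "a \<in> topspace X" "b \<in> topspace X" "c \<in> topspace X"
    "a \<noteq> b" "a \<noteq> c" "b \<noteq> c"
    using assms(2) by blast
  obtain f g k where f: "f \<in> CX X" "f \<noteq> (\<lambda>x. 0)" and g: "g \<in> CX X" "g \<noteq> (\<lambda>x. 0)"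
    and k: "k \<in> CX X" "k \<noteq> (\<lambda>x. 0)"
    and fg: "\<forall>x. f x * g x = 0" and gk: "\<forall>x. g x * k x = 0" and kf: "\<forall>x. k x * f x = 0"
    by (rule tychonoff_three_orthogonal[OF assms(1) abc])
  have adj: "AG_adj X (principal_ideal X f) (principal_ideal X g)"
    "AG_adj X (principal_ideal X g) (principal_ideal X k)"
    "AG_adj X (principal_ideal X k) (principal_ideal X f)"
    using AG_adj_principal_ideal_orthogonal[OF f g fg] AG_adj_principal_ideal_orthogonal[OF g k gk]
      AG_adj_principal_ideal_orthogonal[OF k f kf] by this+
  have triangle: "distinct [principal_ideal X f, principal_ideal X g, principal_ideal X k]"
    "{principal_ideal X f, principal_ideal X g, principal_ideal X k} \<subseteq> AX X"
    using adj unfolding AG_adj_def by auto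
  show ?thesis
    by (rule girth_eq_3_of_triangle[OF triangle adj])
qed

end
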